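(* Let $\mathbb{K}\in\{\mathbb{R},\mathbb{C}\}$, $\star\in\{*,T\}$, $\epsilon_1,\epsilon_2\in\{1,-1\}$, and let $Q(\lambda)=\lambda^2M+\lambda D+K\in\mathbb{K}^{n\times n}[\lambda]$ satisfy $M^\star=\epsilon_1M$, $D^\star=\epsilon_2D$, $K^\star=\epsilon_1K$. Suppose $(X_c,\Lambda_c)\in\mathbb{K}^{n\times p_1}\times\mathbb{K}^{p_1\times p_1}$ and $(X_f,\Lambda_f)\in\mathbb{K}^{n\times p_2}\times\mathbb{K}^{p_2\times p_2}$ are invariant pairs of $Q(\lambda)$, and let $\Lambda_a\in\mathbb{K}^{p_1\times p_1}$. Let $P\in\mathbb{K}^{p_1\times p_1}$ be a nonsingular matrix such that $R:=X_c^\star MX_cP\Lambda_aP^{-1}+\epsilon_1\epsilon_2\Lambda_c^\star X_c^\star MX_c+X_c^\star DX_c$ is nonsingular, and assume $\sigma(\Lambda_c)\cap\sigma(\epsilon_1\epsilon_2\Lambda_f^\star)=\emptyset$. Let $Z=(\Lambda_c-P\Lambda_aP^{-1})R^{-1}$ and $\triangle M=MX_cZX_c^\star M$, $\triangle D=\epsilon_1\epsilon_2MX_cZ\Lambda_c^\star X_c^\star M+MX_cZX_c^\star D+MX_c\Lambda_cZX_c^\star M+DX_cZX_c^\star M$, $\triangle K=\epsilon_1\epsilon_2MX_c\Lambda_cZ\Lambda_c^\star X_c^\star M+MX_c\Lambda_cZX_c^\star D+\epsilon_1\epsilon_2DX_cZ\Lambda_c^\star X_c^\star M+DX_cZX_c^\star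 D$. Then $(X_a,\Lambda_a)$ with $X_a=X_cP$, and $(X_f,\Lambda_f)$, are invariant pairs of $Q_\triangle(\lambda)=\lambda^2(M+\triangle M)+\lambda(D+\triangle D)+(K+\triangle K)\in\mathbb{K}^{n\times n}[\lambda]$. Moreover, with $S:=X_c^\star MX_c\Lambda_c+\epsilon_1\epsilon_2\Lambda_c^\star X_c^\star MX_c+X_c^\star DX_c$, if $SP\Lambda_aP^{-1}=\epsilon_1(SP\Lambda_aP^{-1})^\star$, then $(M+\triangle M)^\star=\epsilon_1(M+\triangle M)$, $(D+\triangle D)^\star=\epsilon_2(D+\triangle D)$ and $(K+\triangle K)^\star=\epsilon_1(K+\triangle K)$.
   Context: For a matrix $A$, $A^*$ is the conjugate transpose and $A^T$ the transpose; $A^\star$ means $A^*$ if $\star=*$ and $A^T$ if $\star=T$. $\sigma(A)$ is the spectrum of a square matrix $A$. A pair $(X,\Lambda)\in\mathbb{K}^{n\times p}\times\mathbb{K}^{p\times p}$ is an invariant pair of $Q(\lambda)=\lambda^2M+\lambda D+K$ if $Q(X,\Lambda):=MX\Lambda^2+DX\Lambda+KX=0$. *)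

theory Defs
  imports "Jordan_Normal_Form.Spectral_Radius" "Jordan_Normal_Form.Schur_Decomposition"
    "Jordan_Normal_Form.Gauss_Jordan_Elimination"
begin

text \<open>Matrices over K are represented as complex matrices; the flag realK selects K = R
  (all given data have real entries).\<close>

definition mstar :: "bool \<Rightarrow> complex mat \<Rightarrow> complex mat" where
  "mstar conjT A = (if conjT then mat_adjoint A else transpose_mat A)"

definition real_mat :: "complex mat \<Rightarrow> bool" where
  "real_mat A \<longleftrightarrow> (\<forall>i<dim_row A. \<forall>j<dim_col A. A $$ (i,j) \<in> \<real>)"

definition minv :: "complex mat \<Rightarrow> complex mat" where
  "minv A = the (mat_inverse A)"

definition invariant_pair ::
  "complex mat \<Rightarrow> complex mat \<Rightarrow> complex mat \<Rightarrow> complex mat \<Rightarrow> complex mat \<Rightarrow> bool" where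
  "invariant_pair M D K X L \<longleftrightarrow>
     M * X * (L * L) + D * X * L + K * X = 0\<^sub>m (dim_row M) (dim_col L)"

end

theory Submission
  imports Defs
begin

text \<open>
  Write e = e1 e2 and, for pairs (X1, L1), (X2, L2),
  Y(X1, L1; X2, L2) = X1^* M X2 L2 + e L1^* X1^* M X2 + X1^* D X2.
  The perturbation factors as
  Q_Delta(lambda) - Q(lambda) = (lambda M Xc + M Xc Lc + D Xc) Z (lambda Xc^* M + e Lc^* Xc^* M + Xc^* D),
  so for every pair (X, L) the residual Q_Delta(X, L) - Q(X, L) is a left multiple of Y(Xc, Lc; X, L).
  For (Xf, Lf) this Y vanishes: for two invariant pairs the symmetries of M, D, K turn Y^* into a
  solution of the Sylvester equation Y^* Lc = e Lf^* Y^*, whose only solution is 0 when the spectra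
  are disjoint. For (Xc P, La) it equals R P, and Z R = Lc - P La P^-1 makes the perturbation cancel
  Q(Xc, Lc) = 0 against Q(Xc, P La P^-1). Finally the hypothesis on S makes Z itself e1-symmetric,
  and every perturbation term inherits the symmetry.
\<close>

section \<open>Finitely supported matrices\<close>

definition supported_in :: "nat \<Rightarrow> (nat \<Rightarrow> nat \<Rightarrow> 'a::zero) \<Rightarrow> bool" where
  "supported_in N f \<longleftrightarrow> (\<forall>i j. N \<le> i \<or> N \<le> j \<longrightarrow> f i j = 0)"

lemma supported_in_mono: "supported_in N f \<Longrightarrow> N \<le> N' \<Longrightarrow> supported_in N' f"
  unfolding supported_in_def by auto

text \<open>Matrices of all sizes embed, by zero padding, into the ring of finitely supported
  \<open>\<nat> \<times> \<nat>\<close> arrays (\<open>fsmat_of\<close> below). Identities between products of compatible matrices are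
  proved there by ring normalisation and pulled back along \<open>fsmat_of_inj\<close>.\<close>

typedef (overloaded) 'a fsmat = "{f :: nat \<Rightarrow> nat \<Rightarrow> 'a::zero. \<exists>N. supported_in N f}"
  morphisms entry Abs_fsmat
  by (rule exI[of _ "\<lambda>_ _. 0"]) (simp add: supported_in_def)

setup_lifting type_definition_fsmat

lemma fsmat_eqI: "(\<And>i j. entry a i j = entry b i j) \<Longrightarrow> a = b"
  by (simp add: entry_inject[symmetric] ext)

lemma ex_supported_entry: "\<exists>N. supported_in N (entry a)"
  using entry by auto

definition support_bound :: "(nat \<Rightarrow> nat \<Rightarrow> 'a::zero) \<Rightarrow> nat" where
  "support_bound f = (LEAST N. supported_in N f)"

lemma sum_support_bound:
  fixes f g :: "nat \<Rightarrow> nat \<Rightarrow> 'a::semiring_0"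
  assumes "supported_in N f"
  shows "(\<Sum>k<support_bound f. f i k * g k j) = (\<Sum>k<N. f i k * g k j)"
proof -
  have "support_bound f \<le> N" and "supported_in (support_bound f) f"
    unfolding support_bound_def using assms by (auto intro: Least_le LeastI)
  then show ?thesis
    by (intro sum.mono_neutral_left) (auto simp: supported_in_def)
qed

lemma ex_common_support:
  assumes "\<exists>N. supported_in N f" and "\<exists>N. supported_in N g"
  obtains N where "supported_in N f" and "supported_in N g"
  using assms by (meson max.cobounded1 max.cobounded2 supported_in_mono)

lemma ex_supported_in_map2:
  assumes "\<exists>N. supported_in N f" and "\<exists>N. supported_in N g" and "h 0 0 = 0"
  shows "\<exists>N. supported_in N (\<lambda>i j. h (f i j) (g i j))"
proof -
  obtain N where "supported_in N f" and "supported_in N g"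
    by (rule ex_common_support[OF assms(1,2)])
  with assms(3) show ?thesis
    by (intro exI[of _ N]) (simp add: supported_in_def)
qed

lemma supported_in_sum_mult:
  fixes f g :: "nat \<Rightarrow> nat \<Rightarrow> 'a::semiring_0"
  shows "supported_in N f \<Longrightarrow> supported_in N g \<Longrightarrow> supported_in N (\<lambda>i j. \<Sum>k<L. f i k * g k j)"
  by (auto simp: supported_in_def)

lemma ex_supported_in_sum_mult:
  fixes f g :: "nat \<Rightarrow> nat \<Rightarrow> 'a::semiring_0"
  assumes "\<exists>N. supported_in N f" and "\<exists>N. supported_in N g"
  shows "\<exists>N. supported_in N (\<lambda>i j. \<Sum>k<L. f i k * g k j)"
proof -
  obtain N where "supported_in N f" and "supported_in N g"
    by (rule ex_common_support[OF assms])
  then show ?thesis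
    by (intro exI[of _ N] supported_in_sum_mult)
qed

instantiation fsmat :: (ring) ring
begin

lift_definition zero_fsmat :: "'a fsmat" is "\<lambda>_ _. 0"
  by (auto simp: supported_in_def)

lift_definition plus_fsmat :: "'a fsmat \<Rightarrow> 'a fsmat \<Rightarrow> 'a fsmat" is "\<lambda>f g i j. f i j + g i j"
  by (rule ex_supported_in_map2) simp_all

lift_definition uminus_fsmat :: "'a fsmat \<Rightarrow> 'a fsmat" is "\<lambda>f i j. - f i j"
  by (auto simp: supported_in_def)

lift_definition minus_fsmat :: "'a fsmat \<Rightarrow> 'a fsmat \<Rightarrow> 'a fsmat" is "\<lambda>f g i j. f i j - g i j"
  by (rule ex_supported_in_map2) simp_all

lift_definition times_fsmat :: "'a fsmat \<Rightarrow> 'a fsmat \<Rightarrow> 'a fsmat"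
  is "\<lambda>f g i j. \<Sum>k<support_bound f. f i k * g k j"
  by (rule ex_supported_in_sum_mult)

lemma entry_times:
  "supported_in N (entry a) \<Longrightarrow> entry (a * b) i j = (\<Sum>k<N. entry a i k * entry b k j)"
  by (simp add: times_fsmat.rep_eq sum_support_bound)

instance
proof
  fix a b c :: "'a fsmat"
  obtain N where N: "supported_in N (entry a)" "supported_in N (entry b)"
    by (rule ex_common_support[OF ex_supported_entry ex_supported_entry])
  show "a + b + c = a + (b + c)"
    by (rule fsmat_eqI) (simp add: plus_fsmat.rep_eq add.assoc)
  show "a + b = b + a"
    by (rule fsmat_eqI) (simp add: plus_fsmat.rep_eq add.commute)
  show "0 + a = a"
    by (rule fsmat_eqI) (simp add: plus_fsmat.rep_eq zero_fsmat.rep_eq)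
  show "- a + a = 0"
    by (rule fsmat_eqI) (simp add: plus_fsmat.rep_eq uminus_fsmat.rep_eq zero_fsmat.rep_eq)
  show "a - b = a + - b"
    by (rule fsmat_eqI) (simp add: plus_fsmat.rep_eq uminus_fsmat.rep_eq minus_fsmat.rep_eq)
  have "supported_in N (entry (a + b))"
    using N by (simp add: plus_fsmat.rep_eq supported_in_def)
  then show "(a + b) * c = a * c + b * c"
    by (intro fsmat_eqI) (use N in \<open>simp add: entry_times plus_fsmat.rep_eq distrib_right sum.distrib\<close>)
  show "a * (b + c) = a * b + a * c"
    by (rule fsmat_eqI) (use N in \<open>simp add: entry_times plus_fsmat.rep_eq distrib_left sum.distrib\<close>)
  show "a * b * c = a * (b * c)"
  proof (rule fsmat_eqI)
    fix i j
    have "supported_in N (entry (a * b))"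
      using N by (simp add: times_fsmat.rep_eq supported_in_sum_mult)
    then have "entry (a * b * c) i j = (\<Sum>l<N. (\<Sum>k<N. entry a i k * entry b k l) * entry c l j)"
      using N by (simp add: entry_times)
    also have "\<dots> = (\<Sum>l<N. \<Sum>k<N. entry a i k * entry b k l * entry c l j)"
      by (simp add: sum_distrib_right)
    also have "\<dots> = (\<Sum>k<N. \<Sum>l<N. entry a i k * entry b k l * entry c l j)"
      by (rule sum.swap)
    also have "\<dots> = (\<Sum>k<N. entry a i k * (\<Sum>l<N. entry b k l * entry c l j))"
      by (simp add: sum_distrib_left mult.assoc)
    also have "\<dots> = entry (a * (b * c)) i j"
      using N by (simp add: entry_times)
    finally show "entry (a * b * c) i j = entry (a * (b * c)) i j" .
  qed
qed

end

lemma supported_in_mat: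
  "supported_in (max (dim_row A) (dim_col A)) (\<lambda>i j. if i < dim_row A \<and> j < dim_col A then A $$ (i, j) else 0)"
  by (auto simp: supported_in_def)

lift_definition fsmat_of :: "'a::ring mat \<Rightarrow> 'a fsmat"
  is "\<lambda>A i j. if i < dim_row A \<and> j < dim_col A then A $$ (i, j) else 0"
  using supported_in_mat by blast

lemma fsmat_of_inj:
  assumes "fsmat_of A = fsmat_of B" and "dim_row A = dim_row B" and "dim_col A = dim_col B"
  shows "A = B"
proof (rule eq_matI)
  fix i j
  assume "i < dim_row B" and "j < dim_col B"
  with assms show "A $$ (i, j) = B $$ (i, j)"
    by (metis (mono_tags) fsmat_of.rep_eq)
qed (use assms in auto)

lemma fsmat_of_add:
  "dim_row A = dim_row B \<Longrightarrow> dim_col A = dim_col B \<Longrightarrow> fsmat_of (A + B) = fsmat_of A + fsmat_of B"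
  by (rule fsmat_eqI) (simp add: fsmat_of.rep_eq plus_fsmat.rep_eq)

lemma fsmat_of_minus:
  "dim_row A = dim_row B \<Longrightarrow> dim_col A = dim_col B \<Longrightarrow> fsmat_of (A - B) = fsmat_of A - fsmat_of B"
  by (rule fsmat_eqI) (simp add: fsmat_of.rep_eq minus_fsmat.rep_eq)

lemma fsmat_of_uminus: "fsmat_of (- A) = - fsmat_of A"
  by (rule fsmat_eqI) (simp add: fsmat_of.rep_eq uminus_fsmat.rep_eq)

lemma fsmat_of_zero: "fsmat_of (0\<^sub>m r c) = 0"
  by (rule fsmat_eqI) (simp add: fsmat_of.rep_eq zero_fsmat.rep_eq)

lemma fsmat_of_mult:
  assumes "dim_col A = dim_row B"
  shows "fsmat_of (A * B) = fsmat_of A * fsmat_of B"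
proof (rule fsmat_eqI)
  fix i j
  have "entry (fsmat_of A * fsmat_of B) i j
      = (\<Sum>k<max (dim_row A) (dim_col A). entry (fsmat_of A) i k * entry (fsmat_of B) k j)"
    by (rule entry_times) (simp add: fsmat_of.rep_eq supported_in_mat)
  also have "\<dots> = (\<Sum>k<dim_col A. entry (fsmat_of A) i k * entry (fsmat_of B) k j)"
    by (rule sum.mono_neutral_right) (auto simp: fsmat_of.rep_eq)
  also have "\<dots> = entry (fsmat_of (A * B)) i j"
    using assms by (auto simp: fsmat_of.rep_eq scalar_prod_def lessThan_atLeast0 intro: sum.cong)
  finally show "entry (fsmat_of (A * B)) i j = entry (fsmat_of A * fsmat_of B) i j" ..
qed

lemmas fsmat_of_hom = fsmat_of_add fsmat_of_minus fsmat_of_uminus fsmat_of_zero fsmat_of_mult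

lemma fsmat_of_mult_eqD:
  fixes A B C :: "'a::ring mat"
  assumes "A * B = C" and "dim_col A = dim_row B"
  shows "fsmat_of A * fsmat_of B = fsmat_of C" and "fsmat_of A * (fsmat_of B * y) = fsmat_of C * y"
  using assms by (simp_all flip: fsmat_of_mult mult.assoc)

lemma fsmat_of_one_mult:
  fixes A :: "'a::ring_1 mat"
  shows "dim_row A = r \<Longrightarrow> fsmat_of (1\<^sub>m r) * fsmat_of A = fsmat_of A"
    and "dim_col A = r \<Longrightarrow> fsmat_of A * fsmat_of (1\<^sub>m r) = fsmat_of A"
  by (simp_all flip: fsmat_of_mult mult.assoc)

section \<open>Conjugate transpose and transpose\<close>

definition sconj :: "bool \<Rightarrow> complex \<Rightarrow> complex" where
  "sconj conjT x = (if conjT then cnj x else x)"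

lemma sconj_simps [simp]:
  "sconj c (sconj c x) = x" "sconj c (x + y) = sconj c x + sconj c y"
  "sconj c (x - y) = sconj c x - sconj c y" "sconj c (- x) = - sconj c x"
  "sconj c (x * y) = sconj c x * sconj c y" "sconj c 0 = 0" "sconj c 1 = 1"
  by (auto simp: sconj_def)

lemma sconj_sum: "sconj c (sum f A) = (\<Sum>x\<in>A. sconj c (f x))"
  by (auto simp: sconj_def)

lemma mstar_eq_mat: "mstar c A = mat (dim_col A) (dim_row A) (\<lambda>(i, j). sconj c (A $$ (j, i)))"
  unfolding mstar_def mat_adjoint_def mat_of_rows_def sconj_def by (rule eq_matI) auto

lemma mstar_dim [simp]: "dim_row (mstar c A) = dim_col A" "dim_col (mstar c A) = dim_row A"
  by (simp_all add: mstar_eq_mat)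

lemma mstar_index [simp]:
  "i < dim_col A \<Longrightarrow> j < dim_row A \<Longrightarrow> mstar c A $$ (i, j) = sconj c (A $$ (j, i))"
  by (simp add: mstar_eq_mat)

lemma mstar_mstar [simp]: "mstar c (mstar c A) = A"
  by (rule eq_matI) auto

lemma mstar_mult: "dim_col A = dim_row B \<Longrightarrow> mstar c (A * B) = mstar c B * mstar c A"
  by (rule eq_matI) (auto simp: scalar_prod_def sconj_sum mult.commute)

lemma mstar_add:
  "dim_row A = dim_row B \<Longrightarrow> dim_col A = dim_col B \<Longrightarrow> mstar c (A + B) = mstar c A + mstar c B"
  by (rule eq_matI) auto

lemma mstar_minus:
  "dim_row A = dim_row B \<Longrightarrow> dim_col A = dim_col B \<Longrightarrow> mstar c (A - B) = mstar c A - mstar c B"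
  by (rule eq_matI) auto

lemma mstar_uminus: "mstar c (- A) = - mstar c A"
  by (rule eq_matI) auto

lemma mstar_smult: "mstar c (a \<cdot>\<^sub>m A) = sconj c a \<cdot>\<^sub>m mstar c A"
  by (rule eq_matI) auto

lemma mstar_zero [simp]: "mstar c (0\<^sub>m r k) = 0\<^sub>m k r"
  by (rule eq_matI) auto

lemma mstar_one: "mstar c (1\<^sub>m r) = 1\<^sub>m r"
  by (rule eq_matI) auto

lemmas mstar_hom = mstar_mult mstar_add mstar_minus mstar_uminus mstar_smult

lemma smult_one_mat [simp]: "(1::'a::ring_1) \<cdot>\<^sub>m A = A"
  by (rule eq_matI) auto

lemma smult_minus_one_mat [simp]: "(-1::'a::ring_1) \<cdot>\<^sub>m A = - A"
  by (rule eq_matI) auto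

lemma minv:
  assumes "A \<in> carrier_mat r r" and "invertible_mat A"
  shows minv_carrier: "minv A \<in> carrier_mat r r"
    and mult_minv: "A * minv A = 1\<^sub>m r"
    and minv_mult: "minv A * A = 1\<^sub>m r"
proof -
  obtain B where AB: "A * B = 1\<^sub>m r" and BA: "B * A = 1\<^sub>m (dim_row B)"
    using assms unfolding invertible_mat_def inverts_mat_def by auto
  then have "B \<in> carrier_mat r r"
    using assms(1) by (metis carrier_matD carrier_matI index_mult_mat(2,3) index_one_mat(2,3))
  with assms(1) AB BA have "A \<in> Units (ring_mat TYPE(complex) r undefined)"
    unfolding Units_def ring_mat_def by auto
  then obtain C where "mat_inverse A = Some C"
    using mat_inverse(1)[OF assms(1)] by fastforce
  with mat_inverse(2)[OF assms(1)]
  show "minv A \<in> carrier_mat r r" "A * minv A = 1\<^sub>m r" "minv A * A = 1\<^sub>m r"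
    unfolding minv_def by auto
qed

lemma mult_minv_cancel:
  assumes A: "A \<in> carrier_mat r c" and R: "R \<in> carrier_mat c c" "invertible_mat R"
  shows "A * minv R * R = A"
  using A by (simp add: assoc_mult_mat[OF A minv_carrier[OF R] R(1)] minv_mult[OF R])

lemma mstar_mult_minv:
  assumes N: "N \<in> carrier_mat p p" and R: "R \<in> carrier_mat p p" "invertible_mat R"
    and NR: "mstar c N * R = a \<cdot>\<^sub>m (mstar c R * N)"
  shows "mstar c (N * minv R) = a \<cdot>\<^sub>m (N * minv R)"
proof -
  have Ri: "minv R \<in> carrier_mat p p"
    by (rule minv_carrier[OF R])
  have RiR: "mstar c (minv R) * mstar c R = 1\<^sub>m p"
    using R Ri by (simp flip: mstar_mult add: mult_minv mstar_one)
  have "mstar c (N * minv R) = mstar c (minv R) * (mstar c N * R) * minv R"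
    using N R Ri by (intro fsmat_of_inj)
      (simp_all add: fsmat_of_hom mstar_mult mult.assoc fsmat_of_mult_eqD[OF mult_minv[OF R]] fsmat_of_one_mult)
  also have "\<dots> = a \<cdot>\<^sub>m (mstar c (minv R) * (mstar c R * N) * minv R)"
  proof -
    have mRi: "mstar c (minv R) \<in> carrier_mat p p" and mRN: "mstar c R * N \<in> carrier_mat p p"
      using Ri R N by auto
    show ?thesis
      unfolding NR by (simp add: mult_smult_distrib[OF mRi mRN]
          mult_smult_assoc_mat[OF mult_carrier_mat[OF mRi mRN] Ri])
  qed
  also have "mstar c (minv R) * (mstar c R * N) = N"
    using N R Ri by (intro fsmat_of_inj)
      (simp_all add: fsmat_of_hom mult.assoc fsmat_of_mult_eqD[OF RiR] fsmat_of_one_mult)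
  finally show ?thesis .
qed

section \<open>Sylvester equations with disjoint spectra\<close>

lemma upper_triangular_diag_in_spectrum:
  fixes T :: "'a::field mat"
  assumes T: "T \<in> carrier_mat p p" and ut: "upper_triangular T" and j: "j < p"
  shows "T $$ (j, j) \<in> spectrum T"
proof -
  have poly_linear_factors: "poly (\<Prod>a\<leftarrow>xs. [:- a, 1:]) x = (\<Prod>a\<leftarrow>xs. x - a)" for xs and x :: 'a
    by (induct xs) (auto simp: algebra_simps)
  have "T $$ (j, j) \<in> set (diag_mat T)"
    using T j by (auto simp: diag_mat_def)
  then show ?thesis
    by (simp add: spectrum_root_char_poly[OF T] char_poly_upper_triangular[OF T ut]
        poly_linear_factors prod_list_zero_iff)
qed

lemma upper_triangular_sylvester_zero:
  fixes Y T B :: "'a::field mat"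
  assumes Y: "Y \<in> carrier_mat q p" and T: "T \<in> carrier_mat p p" and B: "B \<in> carrier_mat q q"
    and ut: "upper_triangular T" and eq: "Y * T = B * Y"
    and diag: "\<And>j. j < p \<Longrightarrow> T $$ (j, j) \<notin> spectrum B"
  shows "Y = 0\<^sub>m q p"
proof -
  have "col Y j = 0\<^sub>v q" if "j < p" for j
    using that
  proof (induction j rule: less_induct)
    case (less j)
    have "B *\<^sub>v col Y j = T $$ (j, j) \<cdot>\<^sub>v col Y j"
    proof (rule eq_vecI)
      fix i
      assume "i < dim_vec (T $$ (j, j) \<cdot>\<^sub>v col Y j)"
      then have i: "i < q"
        using Y by simp
      have "(B *\<^sub>v col Y j) $ i = (Y * T) $$ (i, j)"
        unfolding eq using Y B i less.prems by simp
      also have "\<dots> = (\<Sum>k\<in>{0..<p}. Y $$ (i, k) * T $$ (k, j))"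
        using Y T i less.prems by (simp add: scalar_prod_def)
      also have "\<dots> = (\<Sum>k\<in>{j}. Y $$ (i, k) * T $$ (k, j))"
      proof (rule sum.mono_neutral_right)
        show "\<forall>k\<in>{0..<p} - {j}. Y $$ (i, k) * T $$ (k, j) = 0"
        proof
          fix k
          assume k: "k \<in> {0..<p} - {j}"
          then consider "k < j" | "j < k"
            by fastforce
          then show "Y $$ (i, k) * T $$ (k, j) = 0"
          proof cases
            case 1
            then have "col Y k = 0\<^sub>v q"
              using less by simp
            moreover have "Y $$ (i, k) = col Y k $ i"
              using Y i k by simp
            ultimately show ?thesis
              using i by simp
          next
            case 2
            then show ?thesis
              using ut T k by (simp add: upper_triangular_def)
          qed
        qed
      qed (use less.prems in auto)
      also have "\<dots> = (T $$ (j, j) \<cdot>\<^sub>v col Y j) $ i"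
        using Y i less.prems by (simp add: mult.commute)
      finally show "(B *\<^sub>v col Y j) $ i = (T $$ (j, j) \<cdot>\<^sub>v col Y j) $ i" .
    qed (use B Y in simp)
    moreover have "col Y j \<in> carrier_vec q"
      using Y by (simp add: carrier_vecI)
    ultimately show "col Y j = 0\<^sub>v q"
      using diag[OF less.prems] B unfolding spectrum_def eigenvalue_def eigenvector_def by auto
  qed
  then show ?thesis
    using Y by (intro eq_matI) (auto simp flip: index_col)
qed

lemma sylvester_zero:
  fixes X A B :: "complex mat"
  assumes X: "X \<in> carrier_mat q p" and A: "A \<in> carrier_mat p p" and B: "B \<in> carrier_mat q q"
    and eq: "X * A = B * X" and disj: "spectrum A \<inter> spectrum B = {}"
  shows "X = 0\<^sub>m q p"
proof -
  obtain es where "char_poly A = (\<Prod>a\<leftarrow>es. [:- a, 1:])"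
    using char_poly_factorized[OF A] by auto
  then obtain T where T: "T \<in> carrier_mat p p" and ut: "upper_triangular T" and sim: "similar_mat A T"
    using schur_decomposition_exists[OF A] by blast
  obtain r Pm Qm where carr: "{A, T, Pm, Qm} \<subseteq> carrier_mat r r"
    and PQ: "Pm * Qm = 1\<^sub>m r" and QP: "Qm * Pm = 1\<^sub>m r" and AT: "A = Pm * T * Qm"
    using similar_matD[OF sim] by blast
  have "r = p"
    using A carr by auto
  with carr have Pm: "Pm \<in> carrier_mat p p" and Qm: "Qm \<in> carrier_mat p p"
    by auto
  have "spectrum T = spectrum A"
    using char_poly_similar[OF sim] by (simp add: spectrum_root_char_poly[OF A] spectrum_root_char_poly[OF T])
  then have diag: "T $$ (j, j) \<notin> spectrum B" if "j < p" for j
    using upper_triangular_diag_in_spectrum[OF T ut that] disj by blast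
  have "X * Pm * T = X * Pm * T * (Qm * Pm)"
    using X Pm T QP \<open>r = p\<close> by simp
  also have "\<dots> = X * (Pm * T * Qm) * Pm"
    using X Pm T Qm by (intro fsmat_of_inj) (simp_all add: fsmat_of_mult mult.assoc)
  also have "\<dots> = B * (X * Pm)"
    using X Pm B by (simp flip: AT add: eq)
  finally have XPm: "X * Pm = 0\<^sub>m q p"
    using X Pm by (intro upper_triangular_sylvester_zero[OF _ T B ut _ diag]) auto
  have "X = X * Pm * Qm"
    using X Pm Qm PQ \<open>r = p\<close> by simp
  then show ?thesis
    using Qm by (simp add: XPm)
qed

section \<open>Structured quadratic matrix polynomials\<close>

definition quad_residual :: "'a::semiring_0 mat \<Rightarrow> 'a mat \<Rightarrow> 'a mat \<Rightarrow> 'a mat \<Rightarrow> 'a mat \<Rightarrow> 'a mat" where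
  "quad_residual M D K X L = M * X * (L * L) + D * X * L + K * X"

lemma invariant_pair_iff_quad_residual:
  "invariant_pair M D K X L \<longleftrightarrow> quad_residual M D K X L = 0\<^sub>m (dim_row M) (dim_col L)"
  by (simp add: invariant_pair_def quad_residual_def)

lemma quad_residual_low_rank_update:
  fixes M D K A C Z F G X L :: "'a::ring mat"
  assumes "M \<in> carrier_mat n n" "D \<in> carrier_mat n n" "K \<in> carrier_mat n n"
    and "A \<in> carrier_mat n p" "C \<in> carrier_mat n p" "Z \<in> carrier_mat p p"
    and "F \<in> carrier_mat p n" "G \<in> carrier_mat p n"
    and "X \<in> carrier_mat n q" "L \<in> carrier_mat q q"
  shows "quad_residual (M + A * Z * F) (D + (A * Z * G + C * Z * F)) (K + C * Z * G) X L
       = quad_residual M D K X L + A * Z * (F * X * L + G * X) * L + C * Z * (F * X * L + G * X)"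
  using assms unfolding quad_residual_def
  by (intro fsmat_of_inj) (simp_all add: fsmat_of_hom algebra_simps)

locale structured_quadratic =
  fixes conjT :: bool and e1 e2 :: complex and n :: nat and M D K :: "complex mat"
  assumes signs: "e1 \<in> {1, -1}" "e2 \<in> {1, -1}"
    and carrier: "M \<in> carrier_mat n n" "D \<in> carrier_mat n n" "K \<in> carrier_mat n n"
    and symmetric: "mstar conjT M = e1 \<cdot>\<^sub>m M" "mstar conjT D = e2 \<cdot>\<^sub>m D" "mstar conjT K = e1 \<cdot>\<^sub>m K"
begin

text \<open>Ring normalisation in \<open>fsmat\<close> does not see the scalars \<open>e1, e2\<close>; they are eliminated
  by this case split before normalising.\<close>

lemma signs_cases:
  obtains "e1 = 1" "e2 = 1" | "e1 = 1" "e2 = -1" | "e1 = -1" "e2 = 1" | "e1 = -1" "e2 = -1"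
  using signs by auto

text \<open>\<open>coupling Xc Lc Xc Lc\<close> is the matrix \<open>S\<close> of the theorem and
  \<open>coupling Xc Lc Xc (P * La * minv P)\<close> is its matrix \<open>R\<close>.\<close>

definition coupling :: "complex mat \<Rightarrow> complex mat \<Rightarrow> complex mat \<Rightarrow> complex mat \<Rightarrow> complex mat" where
  "coupling X1 L1 X2 L2 = mstar conjT X1 * M * X2 * L2
     + (e1 * e2) \<cdot>\<^sub>m (mstar conjT L1 * mstar conjT X1 * M * X2) + mstar conjT X1 * D * X2"

lemma coupling_carrier:
  "X1 \<in> carrier_mat n p1 \<Longrightarrow> X2 \<in> carrier_mat n p2 \<Longrightarrow> L2 \<in> carrier_mat p2 p2 \<Longrightarrow>
   coupling X1 L1 X2 L2 \<in> carrier_mat p1 p2"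
  using carrier by (auto simp: coupling_def)

lemma mstar_coupling:
  assumes "X1 \<in> carrier_mat n p1" "L1 \<in> carrier_mat p1 p1" "X2 \<in> carrier_mat n p2" "L2 \<in> carrier_mat p2 p2"
  shows "mstar conjT (coupling X1 L1 X2 L2) = e2 \<cdot>\<^sub>m coupling X2 L2 X1 L1"
  using assms carrier unfolding coupling_def
  by (cases rule: signs_cases; intro fsmat_of_inj; simp add: fsmat_of_hom mstar_hom symmetric algebra_simps)

lemma coupling_intertwines:
  assumes inv1: "invariant_pair M D K X1 L1" and inv2: "invariant_pair M D K X2 L2"
    and X1: "X1 \<in> carrier_mat n p1" and L1: "L1 \<in> carrier_mat p1 p1"
    and X2: "X2 \<in> carrier_mat n p2" and L2: "L2 \<in> carrier_mat p2 p2"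
  shows "coupling X1 L1 X2 L2 * L2 = ((e1 * e2) \<cdot>\<^sub>m mstar conjT L1) * coupling X1 L1 X2 L2"
proof -
  have "coupling X1 L1 X2 L2 * L2 = ((e1 * e2) \<cdot>\<^sub>m mstar conjT L1) * coupling X1 L1 X2 L2
      + mstar conjT X1 * quad_residual M D K X2 L2 - e1 \<cdot>\<^sub>m (mstar conjT (quad_residual M D K X1 L1) * X2)"
    using X1 L1 X2 L2 carrier unfolding coupling_def quad_residual_def
    by (cases rule: signs_cases; intro fsmat_of_inj; simp add: fsmat_of_hom mstar_hom symmetric algebra_simps)
  moreover have "quad_residual M D K X1 L1 = 0\<^sub>m n p1" and "quad_residual M D K X2 L2 = 0\<^sub>m n p2"
    using inv1 inv2 carrier L1 L2 by (simp_all add: invariant_pair_iff_quad_residual)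
  ultimately show ?thesis
    using X1 X2 L1 coupling_carrier[OF X1 X2 L2, of L1] by (intro fsmat_of_inj) (simp_all add: fsmat_of_hom)
qed

lemma coupling_eq_zero:
  assumes inv1: "invariant_pair M D K X1 L1" and inv2: "invariant_pair M D K X2 L2"
    and X1: "X1 \<in> carrier_mat n p1" and L1: "L1 \<in> carrier_mat p1 p1"
    and X2: "X2 \<in> carrier_mat n p2" and L2: "L2 \<in> carrier_mat p2 p2"
    and disjoint: "spectrum L1 \<inter> spectrum ((e1 * e2) \<cdot>\<^sub>m mstar conjT L2) = {}"
  shows "coupling X1 L1 X2 L2 = 0\<^sub>m p1 p2"
proof -
  have "coupling X2 L2 X1 L1 = 0\<^sub>m p2 p1"
    using coupling_carrier[OF X2 X1 L1] L1 L2 coupling_intertwines[OF inv2 inv1 X2 L2 X1 L1] disjoint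
    by (intro sylvester_zero[where A = L1 and B = "(e1 * e2) \<cdot>\<^sub>m mstar conjT L2"]) auto
  then have "mstar conjT (coupling X1 L1 X2 L2) = 0\<^sub>m p2 p1"
    using mstar_coupling[OF X1 L1 X2 L2] by simp
  then show ?thesis
    by (metis mstar_mstar mstar_zero)
qed

definition delta_M :: "complex mat \<Rightarrow> complex mat \<Rightarrow> complex mat" where
  "delta_M Xc Z = M * Xc * Z * mstar conjT Xc * M"

definition delta_D :: "complex mat \<Rightarrow> complex mat \<Rightarrow> complex mat \<Rightarrow> complex mat" where
  "delta_D Xc Lc Z = (e1 * e2) \<cdot>\<^sub>m (M * Xc * Z * mstar conjT Lc * mstar conjT Xc * M)
     + M * Xc * Z * mstar conjT Xc * D + M * Xc * Lc * Z * mstar conjT Xc * M + D * Xc * Z * mstar conjT Xc * M"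

definition delta_K :: "complex mat \<Rightarrow> complex mat \<Rightarrow> complex mat \<Rightarrow> complex mat" where
  "delta_K Xc Lc Z = (e1 * e2) \<cdot>\<^sub>m (M * Xc * Lc * Z * mstar conjT Lc * mstar conjT Xc * M)
     + M * Xc * Lc * Z * mstar conjT Xc * D + (e1 * e2) \<cdot>\<^sub>m (D * Xc * Z * mstar conjT Lc * mstar conjT Xc * M)
     + D * Xc * Z * mstar conjT Xc * D"

lemma quad_residual_perturbed:
  assumes Xc: "Xc \<in> carrier_mat n p" and Lc: "Lc \<in> carrier_mat p p" and Z: "Z \<in> carrier_mat p p"
    and X: "X \<in> carrier_mat n q" and L: "L \<in> carrier_mat q q"
  shows "quad_residual (M + delta_M Xc Z) (D + delta_D Xc Lc Z) (K + delta_K Xc Lc Z) X L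
       = quad_residual M D K X L + M * Xc * Z * coupling Xc Lc X L * L
         + (M * Xc * Lc + D * Xc) * Z * coupling Xc Lc X L"
proof -
  define F where "F = mstar conjT Xc * M"
  define G where "G = (e1 * e2) \<cdot>\<^sub>m (mstar conjT Lc * mstar conjT Xc * M) + mstar conjT Xc * D"
  define C where "C = M * Xc * Lc + D * Xc"
  have carriers: "F \<in> carrier_mat p n" "G \<in> carrier_mat p n" "C \<in> carrier_mat n p"
    using Xc Lc carrier by (auto simp: F_def G_def C_def)
  have "delta_M Xc Z = (M * Xc) * Z * F" "delta_K Xc Lc Z = C * Z * G"
    "delta_D Xc Lc Z = (M * Xc) * Z * G + C * Z * F" "coupling Xc Lc X L = F * X * L + G * X"
    using Xc Lc Z X L carrier unfolding delta_M_def delta_D_def delta_K_def coupling_def F_def G_def C_def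
    by (cases rule: signs_cases; intro fsmat_of_inj; simp add: fsmat_of_hom mstar_hom algebra_simps)+
  then show ?thesis
    using quad_residual_low_rank_update[OF carrier mult_carrier_mat[OF carrier(1) Xc] carriers(3) Z
        carriers(1,2) X L]
    by (simp add: C_def)
qed

lemma invariant_pair_perturbed_if_coupling_zero:
  assumes inv: "invariant_pair M D K X L" and zero: "coupling Xc Lc X L = 0\<^sub>m p q"
    and Xc: "Xc \<in> carrier_mat n p" and Lc: "Lc \<in> carrier_mat p p" and Z: "Z \<in> carrier_mat p p"
    and X: "X \<in> carrier_mat n q" and L: "L \<in> carrier_mat q q"
  shows "invariant_pair (M + delta_M Xc Z) (D + delta_D Xc Lc Z) (K + delta_K Xc Lc Z) X L"
  using inv quad_residual_perturbed[OF Xc Lc Z X L] Xc Lc Z X L carrier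
  unfolding invariant_pair_iff_quad_residual zero
  by (intro fsmat_of_inj) (simp_all add: fsmat_of_hom delta_M_def)

lemma invariant_pair_perturbed_assigned:
  assumes inv: "invariant_pair M D K Xc Lc"
    and Xc: "Xc \<in> carrier_mat n p" and Lc: "Lc \<in> carrier_mat p p" and Z: "Z \<in> carrier_mat p p"
    and La: "La \<in> carrier_mat p p" and P: "P \<in> carrier_mat p p" "invertible_mat P"
    and W: "W = P * La * minv P"
    and ZR: "Z * coupling Xc Lc Xc W = Lc - W"
  shows "invariant_pair (M + delta_M Xc Z) (D + delta_D Xc Lc Z) (K + delta_K Xc Lc Z) (Xc * P) La"
proof -
  define R where "R = coupling Xc Lc Xc W"
  have Wc: "W \<in> carrier_mat p p" and Rc: "R \<in> carrier_mat p p"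
    using P La Xc Lc minv_carrier[OF P] by (auto simp: W R_def intro: coupling_carrier)
  have PLa: "P * La = W * P"
    using P La minv_carrier[OF P] unfolding W by (intro fsmat_of_inj)
      (simp_all add: fsmat_of_hom mult.assoc fsmat_of_mult_eqD[OF minv_mult[OF P]] fsmat_of_one_mult)
  note substitutions = fsmat_of_mult_eqD[OF PLa] fsmat_of_mult_eqD[OF ZR[folded R_def]]
  have "coupling Xc Lc (Xc * P) La = R * P"
    using Xc Lc P La Wc carrier unfolding R_def coupling_def
    by (cases rule: signs_cases; intro fsmat_of_inj; simp add: fsmat_of_hom algebra_simps substitutions)
  then have "quad_residual (M + delta_M Xc Z) (D + delta_D Xc Lc Z) (K + delta_K Xc Lc Z) (Xc * P) La
      = quad_residual M D K Xc Lc * P"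
    using quad_residual_perturbed[OF Xc Lc Z _ La, of "Xc * P"] Xc Lc Z P La Wc Rc carrier
    unfolding quad_residual_def
    by (intro fsmat_of_inj) (simp_all add: fsmat_of_hom algebra_simps substitutions)
  with inv Xc P Lc La carrier show ?thesis
    unfolding invariant_pair_iff_quad_residual by (simp add: delta_M_def)
qed

lemma mstar_perturbed:
  assumes Xc: "Xc \<in> carrier_mat n p" and Lc: "Lc \<in> carrier_mat p p" and Z: "Z \<in> carrier_mat p p"
    and Z_sym: "mstar conjT Z = e1 \<cdot>\<^sub>m Z"
  shows "mstar conjT (M + delta_M Xc Z) = e1 \<cdot>\<^sub>m (M + delta_M Xc Z)"
    and "mstar conjT (D + delta_D Xc Lc Z) = e2 \<cdot>\<^sub>m (D + delta_D Xc Lc Z)"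
    and "mstar conjT (K + delta_K Xc Lc Z) = e1 \<cdot>\<^sub>m (K + delta_K Xc Lc Z)"
  using Xc Lc Z carrier unfolding delta_M_def delta_D_def delta_K_def
  by (cases rule: signs_cases; intro fsmat_of_inj;
      simp add: fsmat_of_hom mstar_hom symmetric Z_sym algebra_simps)+

lemma mstar_assigned_Z:
  assumes inv: "invariant_pair M D K Xc Lc"
    and Xc: "Xc \<in> carrier_mat n p" and Lc: "Lc \<in> carrier_mat p p" and W: "W \<in> carrier_mat p p"
    and R_inv: "invertible_mat (coupling Xc Lc Xc W)"
    and SW: "coupling Xc Lc Xc Lc * W = e1 \<cdot>\<^sub>m mstar conjT (coupling Xc Lc Xc Lc * W)"
  shows "mstar conjT ((Lc - W) * minv (coupling Xc Lc Xc W))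
       = e1 \<cdot>\<^sub>m ((Lc - W) * minv (coupling Xc Lc Xc W))"
proof -
  define S where "S = coupling Xc Lc Xc Lc"
  define R where "R = coupling Xc Lc Xc W"
  define G where "G = mstar conjT Xc * M * Xc"
  have carriers: "S \<in> carrier_mat p p" "R \<in> carrier_mat p p" "G \<in> carrier_mat p p"
    using Xc Lc W carrier by (auto simp: S_def R_def G_def intro: coupling_carrier)
  have R_eq: "R = S - G * (Lc - W)"
    using Xc Lc W carrier unfolding R_def S_def G_def coupling_def
    by (cases rule: signs_cases; intro fsmat_of_inj; simp add: fsmat_of_hom algebra_simps)
  have S_sym: "mstar conjT S = e2 \<cdot>\<^sub>m S"
    unfolding S_def by (rule mstar_coupling[OF Xc Lc Xc Lc])
  have G_sym: "mstar conjT G = e1 \<cdot>\<^sub>m G"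
    using Xc carrier unfolding G_def
    by (cases rule: signs_cases; intro fsmat_of_inj; simp add: fsmat_of_hom mstar_hom symmetric algebra_simps)
  have S_Lc: "mstar conjT Lc * S = (e1 * e2) \<cdot>\<^sub>m (S * Lc)"
    using coupling_intertwines[OF inv inv Xc Lc Xc Lc] Lc carriers(1)
    unfolding S_def[symmetric]
    by (cases rule: signs_cases) (simp_all add: mult_smult_assoc_mat)
  have S_W: "mstar conjT W * S = (e1 * e2) \<cdot>\<^sub>m (S * W)"
    using SW[folded S_def] carriers(1) W
    by (cases rule: signs_cases) (simp_all add: mstar_hom S_sym mult_smult_distrib)
  have "mstar conjT (Lc - W) * R = e1 \<cdot>\<^sub>m (mstar conjT R * (Lc - W))"
    using Lc W carriers unfolding R_eq
    by (cases rule: signs_cases; intro fsmat_of_inj;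
        simp add: fsmat_of_hom mstar_hom S_sym G_sym algebra_simps
          fsmat_of_mult_eqD[OF S_Lc] fsmat_of_mult_eqD[OF S_W])
  then show ?thesis
    using carriers(2) R_inv W unfolding R_def by (intro mstar_mult_minv) (auto intro: minus_carrier_mat)
qed


lemma perturbation_properties:
  assumes invc: "invariant_pair M D K Xc Lc" and invf: "invariant_pair M D K Xf Lf"
    and Xc: "Xc \<in> carrier_mat n p1" and Lc: "Lc \<in> carrier_mat p1 p1"
    and Xf: "Xf \<in> carrier_mat n p2" and Lf: "Lf \<in> carrier_mat p2 p2"
    and La: "La \<in> carrier_mat p1 p1" and P: "P \<in> carrier_mat p1 p1" "invertible_mat P"
    and W: "W = P * La * minv P" and R_inv: "invertible_mat (coupling Xc Lc Xc W)"
    and disjoint: "spectrum Lc \<inter> spectrum ((e1 * e2) \<cdot>\<^sub>m mstar conjT Lf) = {}"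
  defines "Z \<equiv> (Lc - W) * minv (coupling Xc Lc Xc W)"
  shows "invariant_pair (M + delta_M Xc Z) (D + delta_D Xc Lc Z) (K + delta_K Xc Lc Z) (Xc * P) La
    \<and> invariant_pair (M + delta_M Xc Z) (D + delta_D Xc Lc Z) (K + delta_K Xc Lc Z) Xf Lf
    \<and> (coupling Xc Lc Xc Lc * W = e1 \<cdot>\<^sub>m mstar conjT (coupling Xc Lc Xc Lc * W) \<longrightarrow>
         mstar conjT (M + delta_M Xc Z) = e1 \<cdot>\<^sub>m (M + delta_M Xc Z)
       \<and> mstar conjT (D + delta_D Xc Lc Z) = e2 \<cdot>\<^sub>m (D + delta_D Xc Lc Z)
       \<and> mstar conjT (K + delta_K Xc Lc Z) = e1 \<cdot>\<^sub>m (K + delta_K Xc Lc Z))"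
proof -
  have Wc: "W \<in> carrier_mat p1 p1" and Rc: "coupling Xc Lc Xc W \<in> carrier_mat p1 p1"
    using La P Xc minv_carrier[OF P] by (auto simp: W intro: coupling_carrier)
  have Zc: "Z \<in> carrier_mat p1 p1"
    using Lc Wc minv_carrier[OF Rc R_inv] by (auto simp: Z_def intro: minus_carrier_mat)
  have ZR: "Z * coupling Xc Lc Xc W = Lc - W"
    unfolding Z_def using Lc Wc Rc R_inv by (intro mult_minv_cancel) (auto intro: minus_carrier_mat)
  show ?thesis
    using invariant_pair_perturbed_assigned[OF invc Xc Lc Zc La P W ZR]
      invariant_pair_perturbed_if_coupling_zero[OF invf coupling_eq_zero[OF invc invf Xc Lc Xf Lf disjoint]
        Xc Lc Zc Xf Lf]
      mstar_perturbed[OF Xc Lc Zc] mstar_assigned_Z[OF invc Xc Lc Wc R_inv, folded Z_def]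
    by blast
qed

end

theorem theorem3p8:
  fixes realK conjT :: bool
    and e1 e2 :: complex
    and n p1 p2 :: nat
    and M D K Xc Lc Xf Lf La P :: "complex mat"
  assumes e1: "e1 \<in> {1, -1}" and e2: "e2 \<in> {1, -1}"
    and carr: "M \<in> carrier_mat n n" "D \<in> carrier_mat n n" "K \<in> carrier_mat n n"
      "Xc \<in> carrier_mat n p1" "Lc \<in> carrier_mat p1 p1"
      "Xf \<in> carrier_mat n p2" "Lf \<in> carrier_mat p2 p2"
      "La \<in> carrier_mat p1 p1" "P \<in> carrier_mat p1 p1"
    and field: "realK \<longrightarrow> (real_mat M \<and> real_mat D \<and> real_mat K \<and> real_mat Xc \<and> real_mat Lc
                   \<and> real_mat Xf \<and> real_mat Lf \<and> real_mat La \<and> real_mat P)"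
    and symM: "mstar conjT M = e1 \<cdot>\<^sub>m M"
    and symD: "mstar conjT D = e2 \<cdot>\<^sub>m D"
    and symK: "mstar conjT K = e1 \<cdot>\<^sub>m K"
    and invc: "invariant_pair M D K Xc Lc"
    and invf: "invariant_pair M D K Xf Lf"
    and Pinv: "invertible_mat P"
    and Rinv: "invertible_mat
        (mstar conjT Xc * M * Xc * P * La * minv P
         + (e1 * e2) \<cdot>\<^sub>m (mstar conjT Lc * mstar conjT Xc * M * Xc)
         + mstar conjT Xc * D * Xc)"
    and spec: "spectrum Lc \<inter> spectrum ((e1 * e2) \<cdot>\<^sub>m mstar conjT Lf) = {}"
  shows "let S = \<lambda>A. mstar conjT A;
             e = e1 * e2;
             R = S Xc * M * Xc * P * La * minv P + e \<cdot>\<^sub>m (S Lc * S Xc * M * Xc) + S Xc * D * Xc;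
             Z = (Lc - P * La * minv P) * minv R;
             dM = M * Xc * Z * S Xc * M;
             dD = e \<cdot>\<^sub>m (M * Xc * Z * S Lc * S Xc * M) + M * Xc * Z * S Xc * D
                  + M * Xc * Lc * Z * S Xc * M + D * Xc * Z * S Xc * M;
             dK = e \<cdot>\<^sub>m (M * Xc * Lc * Z * S Lc * S Xc * M) + M * Xc * Lc * Z * S Xc * D
                  + e \<cdot>\<^sub>m (D * Xc * Z * S Lc * S Xc * M) + D * Xc * Z * S Xc * D;
             M' = M + dM; D' = D + dD; K' = K + dK;
             Smat = S Xc * M * Xc * Lc + e \<cdot>\<^sub>m (S Lc * S Xc * M * Xc) + S Xc * D * Xc
         in invariant_pair M' D' K' (Xc * P) La
          \<and> invariant_pair M' D' K' Xf Lf
          \<and> (Smat * P * La * minv P = e1 \<cdot>\<^sub>m S (Smat * P * La * minv P) \<longrightarrow>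
               S M' = e1 \<cdot>\<^sub>m M' \<and> S D' = e2 \<cdot>\<^sub>m D' \<and> S K' = e1 \<cdot>\<^sub>m K')"
proof -
  interpret structured_quadratic conjT e1 e2 n M D K
    using e1 e2 carr symM symD symK by unfold_locales auto
  define W where "W = P * La * minv P"
  have R_eq: "mstar conjT Xc * M * Xc * P * La * minv P
      + (e1 * e2) \<cdot>\<^sub>m (mstar conjT Lc * mstar conjT Xc * M * Xc) + mstar conjT Xc * D * Xc
      = coupling Xc Lc Xc W"
    using carr minv_carrier[OF carr(9) Pinv] unfolding W_def coupling_def
    by (intro fsmat_of_inj) (simp_all add: fsmat_of_hom mult.assoc)
  have S_eq: "(mstar conjT Xc * M * Xc * Lc + (e1 * e2) \<cdot>\<^sub>m (mstar conjT Lc * mstar conjT Xc * M * Xc)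
      + mstar conjT Xc * D * Xc) * P * La * minv P = coupling Xc Lc Xc Lc * W"
    using carr minv_carrier[OF carr(9) Pinv] unfolding W_def coupling_def
    by (intro fsmat_of_inj) (simp_all add: fsmat_of_hom mult.assoc)
  have "invertible_mat (coupling Xc Lc Xc W)"
    using Rinv by (simp add: R_eq)
  from perturbation_properties[OF invc invf carr(4-9) Pinv W_def this spec]
  show ?thesis
    unfolding Let_def R_eq S_eq delta_M_def delta_D_def delta_K_def W_def .
qed

end
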